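(* Let $(A_C,\mathcal R_A)$ be an autocatalytic core of a CRN. Then $|A_C|=|\mathcal R_A|$ and its stoichiometric matrix $\overline{\mathbb S}=(\mathbb S)_{A_C}^{\mathcal R_A}$ is a square invertible matrix.
   Context: A chemical reaction network (CRN) consists of a finite species set $\mathcal S$ and a finite set $\mathcal R$ of reactions; each reaction $r$ is written $r^-\to r^+$ with input complex $r^-\in\mathbb Z_{\ge0}^{\mathcal S}$ and output complex $r^+\in\mathbb Z_{\ge0}^{\mathcal S}$. The input and output matrices $\mathbb S^-,\mathbb S^+$ are the $\mathcal S\times\mathcal R$ matrices whose column indexed by $r$ is $r^-$, resp. $r^+$; the stoichiometric matrix is $\mathbb S=\mathbb S^+-\mathbb S^-$. For a matrix $\mathbb A$ with rows indexed by $\mathcal S$ and columns by $\mathcal R$ and subsets $M\subseteq\mathcal S$, $N\subseteq\mathcal R$, $(\mathbb A)_M^N$ is the submatrix with rows in $M$ and columns in $N$. For a vector $\mathbf v$: $\mathbf v\gg\mathbf 0$ means all entries are $>0$; $\mathbf v>\mathbf 0$ (semi-positive) means all entries are $\ge0$ and $\mathbf v\ne\mathbf 0$. A motif is a pair $(\mathcal M,\mathcal R')$ with $\mathcal M\subseteq\mathcal S$, $\mathcal R'\subseteq\mathcal R$. It is exclusively autocatalytic if: (i) there is $\mathbf v\in\mathbb R^{\mathcal R'}$, $\mathbf v\gg\mathbf0$, with $(\mathbb S)_{\mathcal M}^{\mathcal R'}\mathbf v\gg\mathbf 0$; (ii) every row of $(\mathbb S^-)_{\mathcal M}^{\mathcal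 R'}$ is semi-positive; (iii) every column of $(\mathbb S^-)_{\mathcal M}^{\mathcal R'}$ is semi-positive. An autocatalytic core is an exclusively autocatalytic motif $(A_C,\mathcal R_A)$ such that no motif $(\mathcal M',\mathcal R'')\neq(A_C,\mathcal R_A)$ with $\mathcal M'\subseteq A_C$ and $\mathcal R''\subseteq\mathcal R_A$ is exclusively autocatalytic; $A_C$ is called its core set. *)

theory Defs
  imports "HOL-Analysis.Analysis"
begin

text \<open>A CRN is given by finite sets of species S :: 's set and reactions R :: 'r set,
  together with the input matrix Sm and output matrix Sp (entries are natural numbers,
  Sm s r = coefficient of species s in the input complex of reaction r).\<close>

definition stoich :: "('s \<Rightarrow> 'r \<Rightarrow> nat) \<Rightarrow> ('s \<Rightarrow> 'r \<Rightarrow> nat) \<Rightarrow> 's \<Rightarrow> 'r \<Rightarrow> real" where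
  "stoich Sm Sp s r = real (Sp s r) - real (Sm s r)"

text \<open>Exclusively autocatalytic motif (M, R'). Nonemptiness of M is part of the notion
  (a motif with no species is not considered; with M nonempty, (ii) forces R' nonempty).\<close>
definition excl_autocatalytic ::
  "('s \<Rightarrow> 'r \<Rightarrow> nat) \<Rightarrow> ('s \<Rightarrow> 'r \<Rightarrow> nat) \<Rightarrow> 's set \<Rightarrow> 'r set \<Rightarrow> bool" where
  "excl_autocatalytic Sm Sp M R' \<longleftrightarrow>
     M \<noteq> {} \<and>
     (\<exists>v :: 'r \<Rightarrow> real. (\<forall>r\<in>R'. v r > 0) \<and>
        (\<forall>s\<in>M. (\<Sum>r\<in>R'. stoich Sm Sp s r * v r) > 0)) \<and>
     (\<forall>s\<in>M. \<exists>r\<in>R'. Sm s r > 0) \<and>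
     (\<forall>r\<in>R'. \<exists>s\<in>M. Sm s r > 0)"

definition autocatalytic_core ::
  "'s set \<Rightarrow> 'r set \<Rightarrow> ('s \<Rightarrow> 'r \<Rightarrow> nat) \<Rightarrow> ('s \<Rightarrow> 'r \<Rightarrow> nat) \<Rightarrow> 's set \<Rightarrow> 'r set \<Rightarrow> bool" where
  "autocatalytic_core S R Sm Sp AC RA \<longleftrightarrow>
     AC \<subseteq> S \<and> RA \<subseteq> R \<and> excl_autocatalytic Sm Sp AC RA \<and>
     (\<forall>M' R''. M' \<subseteq> AC \<and> R'' \<subseteq> RA \<and> (M', R'') \<noteq> (AC, RA) \<longrightarrow>
        \<not> excl_autocatalytic Sm Sp M' R'')"

definition invertible_on :: "'a set \<Rightarrow> 'b set \<Rightarrow> ('a \<Rightarrow> 'b \<Rightarrow> real) \<Rightarrow> bool" where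
  "invertible_on M N A \<longleftrightarrow>
     (\<exists>B :: 'b \<Rightarrow> 'a \<Rightarrow> real.
        (\<forall>i\<in>M. \<forall>j\<in>M. (\<Sum>k\<in>N. A i k * B k j) = (if i = j then 1 else 0)) \<and>
        (\<forall>k\<in>N. \<forall>l\<in>N. (\<Sum>i\<in>M. B k i * A i l) = (if k = l then 1 else 0)))"

end

theory Submission
  imports Defs "Jordan_Normal_Form.Determinant"
begin

text \<open>Minimality of the core does all the work. Choosing one reactant species in the core set
  for every reaction of the core gives a sub-motif on the same reactions, so there are at least
  as many reactions as species. If the restricted stoichiometric matrix had a nonzero kernel
  vector \<open>w\<close>, we may take \<open>w\<close> negative somewhere; moving a positive flux \<open>v\<close> with positive net
  production along \<open>w\<close> until it first leaves the positive orthant keeps the net production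
  but kills some reaction rate, and the support of the new flux is a strictly smaller
  exclusively autocatalytic motif. So the matrix is injective with at least as many columns as
  rows, hence square and invertible.\<close>

unbundle no vec_syntax \<comment> \<open>so that \<open>$\<close> is unambiguously vector indexing of JNF\<close>

definition trivial_kernel_on :: "'a set \<Rightarrow> 'b set \<Rightarrow> ('a \<Rightarrow> 'b \<Rightarrow> real) \<Rightarrow> bool" where
  "trivial_kernel_on M N A \<longleftrightarrow>
     (\<forall>w. (\<forall>i\<in>M. (\<Sum>k\<in>N. A i k * w k) = 0) \<longrightarrow> (\<forall>k\<in>N. w k = 0))"

lemma det_zero_if_zero_row:
  fixes P :: "'a :: comm_ring_1 mat"
  assumes "P \<in> carrier_mat m m" and "k < m" and "\<forall>j<m. P $$ (k, j) = 0"
  shows "det P = 0"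
  using laplace_expansion_row[OF assms(1,2)] assms(3) by simp

lemma invertible_on_if_det_nonzero:
  fixes A :: "'a \<Rightarrow> 'b \<Rightarrow> real"
  assumes a: "bij_betw a {0..<n} M" and b: "bij_betw b {0..<n} N"
    and P: "P \<in> carrier_mat n n" and det: "det P \<noteq> 0"
    and entries: "\<forall>i<n. \<forall>j<n. P $$ (i, j) = A (a i) (b j)"
  shows "invertible_on M N A"
proof -
  obtain Q where Q: "Q \<in> carrier_mat n n" "Q * P = 1\<^sub>m n" "P * Q = 1\<^sub>m n"
    using det_non_zero_imp_unit[OF P det, of "()"] unfolding Units_def ring_mat_def by auto
  define ia where "ia = inv_into {0..<n} a"
  define ib where "ib = inv_into {0..<n} b"
  have ia: "ia s < n" "a (ia s) = s" if "s \<in> M" for s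
    using that bij_betw_inv_into_right[OF a] bij_betwE[OF bij_betw_inv_into[OF a]]
    unfolding ia_def by auto
  have ib: "ib r < n" "b (ib r) = r" if "r \<in> N" for r
    using that bij_betw_inv_into_right[OF b] bij_betwE[OF bij_betw_inv_into[OF b]]
    unfolding ib_def by auto
  have ia_inj: "ia s = ia s' \<longleftrightarrow> s = s'" if "s \<in> M" "s' \<in> M" for s s'
    using ia(2)[OF that(1)] ia(2)[OF that(2)] by metis
  have ib_inj: "ib r = ib r' \<longleftrightarrow> r = r'" if "r \<in> N" "r' \<in> N" for r r'
    using ib(2)[OF that(1)] ib(2)[OF that(2)] by metis
  have a_ia: "ia (a i) = i" and b_ib: "ib (b i) = i" if "i < n" for i
    using that bij_betw_inv_into_left[OF a] bij_betw_inv_into_left[OF b]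
    unfolding ia_def ib_def by auto
  show ?thesis
    unfolding invertible_on_def
  proof (rule exI[of _ "\<lambda>r s. Q $$ (ib r, ia s)"], intro conjI ballI)
    fix s s' assume s: "s \<in> M" and s': "s' \<in> M"
    have "(\<Sum>r\<in>N. A s r * Q $$ (ib r, ia s')) = (\<Sum>l\<in>{0..<n}. P $$ (ia s, l) * Q $$ (l, ia s'))"
      using ia[OF s] by (simp add: sum.reindex_bij_betw[OF b, symmetric] entries b_ib)
    also have "\<dots> = (P * Q) $$ (ia s, ia s')"
      using ia(1)[OF s] ia(1)[OF s'] P Q(1) by (simp add: scalar_prod_def row_def col_def)
    also have "\<dots> = (if s = s' then 1 else 0)"
      using ia(1)[OF s] ia(1)[OF s'] ia_inj[OF s s'] by (simp add: Q(3))
    finally show "(\<Sum>r\<in>N. A s r * Q $$ (ib r, ia s')) = (if s = s' then 1 else 0)" .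
  next
    fix r r' assume r: "r \<in> N" and r': "r' \<in> N"
    have "(\<Sum>s\<in>M. Q $$ (ib r, ia s) * A s r') = (\<Sum>l\<in>{0..<n}. Q $$ (ib r, l) * P $$ (l, ib r'))"
      using ib[OF r'] by (simp add: sum.reindex_bij_betw[OF a, symmetric] entries a_ia)
    also have "\<dots> = (Q * P) $$ (ib r, ib r')"
      using ib(1)[OF r] ib(1)[OF r'] P Q(1) by (simp add: scalar_prod_def row_def col_def)
    also have "\<dots> = (if r = r' then 1 else 0)"
      using ib(1)[OF r] ib(1)[OF r'] ib_inj[OF r r'] by (simp add: Q(2))
    finally show "(\<Sum>s\<in>M. Q $$ (ib r, ia s) * A s r') = (if r = r' then 1 else 0)" .
  qed
qed

lemma card_eq_and_invertible_on_if_trivial_kernel: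
  assumes "finite M" and "finite N" and card_le: "card M \<le> card N"
    and ker: "trivial_kernel_on M N A"
  shows "card M = card N \<and> invertible_on M N A"
proof -
  define n where "n = card M"
  define m where "m = card N"
  obtain a where a: "bij_betw a {0..<n} M"
    using ex_bij_betw_nat_finite[OF \<open>finite M\<close>] unfolding n_def by blast
  obtain b where b: "bij_betw b {0..<m} N"
    using ex_bij_betw_nat_finite[OF \<open>finite N\<close>] unfolding m_def by blast
  have "n \<le> m" using card_le unfolding n_def m_def .
  \<comment> \<open>Padding with zero rows: a kernel vector of \<open>P\<close> is one of \<open>A\<close>, while an extra
    zero row would force \<open>det P = 0\<close>.\<close>
  define P where "P = mat m m (\<lambda>(i, j). if i < n then A (a i) (b j) else 0)"
  have P: "P \<in> carrier_mat m m" unfolding P_def by simp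
  have det: "det P \<noteq> 0"
  proof
    assume "det P = 0"
    then obtain x where x: "x \<in> carrier_vec m" "x \<noteq> 0\<^sub>v m" "P *\<^sub>v x = 0\<^sub>v m"
      using det_0_iff_vec_prod_zero[OF P] by blast
    define w where "w r = x $ inv_into {0..<m} b r" for r
    have w_b: "w (b l) = x $ l" if "l < m" for l
      using that bij_betw_inv_into_left[OF b] unfolding w_def by simp
    have "\<forall>s\<in>M. (\<Sum>r\<in>N. A s r * w r) = 0"
    proof
      fix s assume "s \<in> M"
      then obtain i where i: "i < n" "s = a i" using a by (auto simp: bij_betw_def)
      have "(\<Sum>r\<in>N. A s r * w r) = (\<Sum>l\<in>{0..<m}. A (a i) (b l) * x $ l)"
        using i by (simp add: sum.reindex_bij_betw[OF b, symmetric] w_b)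
      also have "\<dots> = (P *\<^sub>v x) $ i"
        using i \<open>n \<le> m\<close> x(1) unfolding P_def by (simp add: scalar_prod_def row_def)
      also have "\<dots> = 0" using x(3) i \<open>n \<le> m\<close> by simp
      finally show "(\<Sum>r\<in>N. A s r * w r) = 0" .
    qed
    then have "\<forall>r\<in>N. w r = 0" using ker unfolding trivial_kernel_on_def by blast
    then have "x = 0\<^sub>v m"
      using x(1) w_b bij_betwE[OF b] by (intro eq_vecI) auto
    with x(2) show False ..
  qed
  have "n = m"
  proof (rule ccontr)
    assume "n \<noteq> m"
    with \<open>n \<le> m\<close> have "\<forall>j<m. P $$ (m - 1, j) = 0" unfolding P_def by auto
    then have "det P = 0" using \<open>n \<le> m\<close> \<open>n \<noteq> m\<close> by (intro det_zero_if_zero_row[OF P]) auto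
    with det show False ..
  qed
  have "invertible_on M N A"
    using a b P det \<open>n = m\<close> by (intro invertible_on_if_det_nonzero[of a m M b N P A]) (auto simp: P_def)
  with \<open>n = m\<close> show ?thesis unfolding n_def m_def by simp
qed

lemma autocatalytic_core_minimal:
  assumes "autocatalytic_core S R Sm Sp AC RA"
    and "M' \<subseteq> AC" and "R' \<subseteq> RA" and "excl_autocatalytic Sm Sp M' R'"
  shows "M' = AC \<and> R' = RA"
  using assms unfolding autocatalytic_core_def by blast

lemma card_core_species_le_card_reactions:
  assumes "finite RA" and core: "autocatalytic_core S R Sm Sp AC RA"
  shows "card AC \<le> card RA"
proof -
  have motif: "excl_autocatalytic Sm Sp AC RA"
    using core unfolding autocatalytic_core_def by blast
  then obtain g where g: "\<forall>r\<in>RA. g r \<in> AC \<and> Sm (g r) r > 0"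
    unfolding excl_autocatalytic_def by metis
  have "excl_autocatalytic Sm Sp (g ` RA) RA"
    using motif g unfolding excl_autocatalytic_def by (auto 4 3)
  then have "g ` RA = AC"
    using autocatalytic_core_minimal[OF core] g by blast
  then show ?thesis
    using card_image_le[OF \<open>finite RA\<close>, of g] by simp
qed

lemma ray_leaves_positive_orthant:
  fixes v w :: "'a \<Rightarrow> real"
  assumes "finite N" and v: "\<forall>r\<in>N. v r > 0" and "r1 \<in> N" and "w r1 < 0"
  shows "\<exists>t. (\<forall>r\<in>N. v r + t * w r \<ge> 0) \<and> (\<exists>r0\<in>N. v r0 + t * w r0 = 0)"
proof -
  define D where "D = {r\<in>N. w r < 0}"
  define t where "t = Min ((\<lambda>r. v r / - w r) ` D)"
  have D: "finite D" "r1 \<in> D" using assms unfolding D_def by auto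
  have "t \<in> (\<lambda>r. v r / - w r) ` D" unfolding t_def using D by (intro Min_in) auto
  then obtain r0 where r0: "r0 \<in> D" "t = v r0 / - w r0" by blast
  have "v r + t * w r \<ge> 0" if "r \<in> N" for r
  proof (cases "w r < 0")
    case True
    then have "t \<le> v r / - w r" using D that unfolding t_def D_def by simp
    with True show ?thesis by (simp add: field_simps)
  next
    case False
    have "t \<ge> 0" using r0 v unfolding D_def by (simp add: divide_pos_neg less_imp_le)
    with False have "t * w r \<ge> 0" by simp
    moreover have "v r > 0" using v that by blast
    ultimately show ?thesis by linarith
  qed
  moreover have "v r0 + t * w r0 = 0" using r0 unfolding D_def by simp
  ultimately show ?thesis using r0(1) unfolding D_def by blast
qed

lemma excl_autocatalytic_on_support:
  assumes "finite R'" and motif: "excl_autocatalytic Sm Sp M R'"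
    and u_nonneg: "\<forall>r\<in>R'. u r \<ge> 0"
    and u_prod: "\<forall>s\<in>M. (\<Sum>r\<in>R'. stoich Sm Sp s r * u r) > 0"
  shows "excl_autocatalytic Sm Sp {s\<in>M. \<exists>r\<in>R'. u r > 0 \<and> Sm s r > 0} {r\<in>R'. u r > 0}"
    (is "excl_autocatalytic Sm Sp ?M ?R")
proof -
  have prod: "(\<Sum>r\<in>?R. stoich Sm Sp s r * u r) = (\<Sum>r\<in>R'. stoich Sm Sp s r * u r)" for s
    using u_nonneg by (intro sum.mono_neutral_left \<open>finite R'\<close>) force+
  have consumed: "\<forall>r\<in>?R. \<exists>s\<in>?M. Sm s r > 0"
    using motif unfolding excl_autocatalytic_def by fastforce
  obtain s0 where "s0 \<in> M" using motif unfolding excl_autocatalytic_def by blast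
  with u_prod prod have "(\<Sum>r\<in>?R. stoich Sm Sp s0 r * u r) \<noteq> 0" by (metis less_irrefl)
  then have "?R \<noteq> {}" by (metis sum.empty)
  show ?thesis
    unfolding excl_autocatalytic_def
  proof (intro conjI exI[of _ u])
    show "?M \<noteq> {}" using \<open>?R \<noteq> {}\<close> consumed by blast
    show "\<forall>r\<in>?R. u r > 0" by simp
    show "\<forall>s\<in>?M. (\<Sum>r\<in>?R. stoich Sm Sp s r * u r) > 0" using u_prod prod by simp
    show "\<forall>s\<in>?M. \<exists>r\<in>?R. Sm s r > 0" by auto
  qed (fact consumed)
qed

lemma autocatalytic_core_trivial_kernel:
  assumes "finite RA" and core: "autocatalytic_core S R Sm Sp AC RA"
  shows "trivial_kernel_on AC RA (stoich Sm Sp)"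
  unfolding trivial_kernel_on_def
proof (intro allI impI ballI, rule ccontr)
  fix w r1
  assume ker: "\<forall>s\<in>AC. (\<Sum>r\<in>RA. stoich Sm Sp s r * w r) = 0" and "r1 \<in> RA" "w r1 \<noteq> 0"
  have motif: "excl_autocatalytic Sm Sp AC RA"
    using core unfolding autocatalytic_core_def by blast
  then obtain v where v: "\<forall>r\<in>RA. v r > 0" "\<forall>s\<in>AC. (\<Sum>r\<in>RA. stoich Sm Sp s r * v r) > 0"
    unfolding excl_autocatalytic_def by blast
  define c :: real where "c = (if w r1 < 0 then 1 else -1)"
  define w' where "w' r = c * w r" for r
  have ker': "(\<Sum>r\<in>RA. stoich Sm Sp s r * w' r) = 0" if "s \<in> AC" for s
  proof -
    have "(\<Sum>r\<in>RA. stoich Sm Sp s r * w' r) = c * (\<Sum>r\<in>RA. stoich Sm Sp s r * w r)"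
      unfolding w'_def sum_distrib_left by (simp add: algebra_simps)
    with ker that show ?thesis by simp
  qed
  have "w' r1 < 0" using \<open>w r1 \<noteq> 0\<close> by (simp add: w'_def c_def)
  then obtain t r0 where t: "\<forall>r\<in>RA. v r + t * w' r \<ge> 0" and r0: "r0 \<in> RA" "v r0 + t * w' r0 = 0"
    using ray_leaves_positive_orthant[OF \<open>finite RA\<close> v(1) \<open>r1 \<in> RA\<close>] by blast
  define u where "u r = v r + t * w' r" for r
  have "(\<Sum>r\<in>RA. stoich Sm Sp s r * u r) = (\<Sum>r\<in>RA. stoich Sm Sp s r * v r)" if "s \<in> AC" for s
  proof -
    have "(\<Sum>r\<in>RA. stoich Sm Sp s r * u r)
        = (\<Sum>r\<in>RA. stoich Sm Sp s r * v r) + t * (\<Sum>r\<in>RA. stoich Sm Sp s r * w' r)"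
      unfolding u_def sum_distrib_left by (simp add: algebra_simps sum.distrib)
    with ker'[OF that] show ?thesis by simp
  qed
  then have support:
    "excl_autocatalytic Sm Sp {s\<in>AC. \<exists>r\<in>RA. u r > 0 \<and> Sm s r > 0} {r\<in>RA. u r > 0}"
    using v(2) t by (intro excl_autocatalytic_on_support[OF \<open>finite RA\<close> motif]) (auto simp: u_def)
  have "{r\<in>RA. u r > 0} = RA"
    using autocatalytic_core_minimal[OF core _ _ support] by auto
  with r0(1) have "u r0 > 0" by blast
  with r0(2) show False by (simp add: u_def)
qed

theorem mainTheorem5:
  fixes S :: "'s set" and R :: "'r set"
    and Sm Sp :: "'s \<Rightarrow> 'r \<Rightarrow> nat"
    and AC :: "'s set" and RA :: "'r set"
  assumes "finite S" and "finite R"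
    and "autocatalytic_core S R Sm Sp AC RA"
  shows "card AC = card RA \<and> invertible_on AC RA (stoich Sm Sp)"
proof -
  have "finite AC" and "finite RA"
    using assms finite_subset unfolding autocatalytic_core_def by blast+
  then show ?thesis
    using card_core_species_le_card_reactions[OF \<open>finite RA\<close> assms(3)]
      autocatalytic_core_trivial_kernel[OF \<open>finite RA\<close> assms(3)]
    by (rule card_eq_and_invertible_on_if_trivial_kernel)
qed

end
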